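(* Let $G=(V,E)$ be a finite graph of maximum degree $\Delta$ with adjacency matrix $A$, and let $\boldsymbol\lambda\in(0,\infty)^V$ satisfy $\lambda_u<1/\Delta$ for all $u$. Let $B=\mathrm{diag}(1+1/\lambda_u: u\in V)$. Then every vector $\mathbf x\in\mathbb R^V$ with $\mathbf x\ge\mathbf 0$ and $(B+A)\mathbf x\ge\mathbf 1$ satisfies \[ \sum_{u\in V}x_u\ \ge\ \sum_{u\in V}\frac{\lambda_u}{1+(d_u+1)\lambda_u}. \]
   Context: $d_u$ denotes the degree of $u$; vector inequalities are entrywise; $\mathbf 1$ is the all-ones vector. *)

theory Defs
  imports Complex_Main
begin

definition simple_graph :: "'a set \<Rightarrow> ('a \<Rightarrow> 'a \<Rightarrow> bool) \<Rightarrow> bool" where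
  "simple_graph V E \<longleftrightarrow> finite V \<and> (\<forall>u v. E u v \<longrightarrow> E v u)
     \<and> (\<forall>u. \<not> E u u) \<and> (\<forall>u v. E u v \<longrightarrow> u \<in> V \<and> v \<in> V)"

definition neighbours :: "'a set \<Rightarrow> ('a \<Rightarrow> 'a \<Rightarrow> bool) \<Rightarrow> 'a \<Rightarrow> 'a set" where
  "neighbours V E u = {v \<in> V. E u v}"

definition degree :: "'a set \<Rightarrow> ('a \<Rightarrow> 'a \<Rightarrow> bool) \<Rightarrow> 'a \<Rightarrow> nat" where
  "degree V E u = card (neighbours V E u)"

definition max_degree :: "'a set \<Rightarrow> ('a \<Rightarrow> 'a \<Rightarrow> bool) \<Rightarrow> nat" where
  "max_degree V E = Max (insert 0 (degree V E ` V))"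

definition adj_matrix :: "('a \<Rightarrow> 'a \<Rightarrow> bool) \<Rightarrow> 'a \<Rightarrow> 'a \<Rightarrow> real" where
  "adj_matrix E u v = (if E u v then 1 else 0)"

definition diag_B :: "('a \<Rightarrow> real) \<Rightarrow> 'a \<Rightarrow> 'a \<Rightarrow> real" where
  "diag_B lam u v = (if u = v then 1 + 1 / lam u else 0)"

definition mat_vec :: "'a set \<Rightarrow> ('a \<Rightarrow> 'a \<Rightarrow> real) \<Rightarrow> ('a \<Rightarrow> real) \<Rightarrow> 'a \<Rightarrow> real" where
  "mat_vec V M x u = (\<Sum>v\<in>V. M u v * x v)"

end

theory Submission imports Defs begin

text \<open>Write \<open>M = D + A\<close> with \<open>D = diag(1 + 1/\<lambda>\<^sub>u)\<close>, so that \<open>D\<^sub>u \<ge> \<Delta> + 1\<close>. Since \<open>M\<close> is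
  strictly diagonally dominant, \<open>M z = \<one>\<close> has a solution \<open>z\<close>. As \<open>\<Sum>\<^sub>u\<^sub>\<sim>\<^sub>v 1/D\<^sub>u \<le> 1\<close>, the
  operator \<open>M\<close> is sum-monotone: \<open>M e \<ge> 0\<close> implies \<open>\<Sum>e \<ge> 0\<close>; applied to \<open>e = x - z\<close> this
  gives \<open>\<Sum>x \<ge> \<Sum>z\<close>. Finally \<open>M\<close> is positive semidefinite because \<open>D\<^sub>u \<ge> d\<^sub>u\<close>, so \<open>z\<close>
  maximises \<open>2 \<Sum>w - w\<^sup>T M w\<close>; the choice \<open>w\<^sub>u = 1/(D\<^sub>u + d\<^sub>u)\<close>, for which
  \<open>w\<^sup>T M w \<le> \<Sum>w\<close>, yields \<open>\<Sum>z \<ge> \<Sum>w\<close>, and \<open>\<Sum>w\<close> is the claimed bound.\<close>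

definition strictly_diag_dominant :: "'a set \<Rightarrow> ('a \<Rightarrow> 'a \<Rightarrow> real) \<Rightarrow> bool" where
  "strictly_diag_dominant V M \<longleftrightarrow> (\<forall>u\<in>V. (\<Sum>v\<in>V - {u}. \<bar>M u v\<bar>) < \<bar>M u u\<bar>)"

lemma strictly_diag_dominant_diag_nonzero:
  assumes "strictly_diag_dominant V M" "u \<in> V"
  shows "M u u \<noteq> 0"
proof -
  have "0 \<le> (\<Sum>v\<in>V - {u}. \<bar>M u v\<bar>)" by (simp add: sum_nonneg)
  moreover have "(\<Sum>v\<in>V - {u}. \<bar>M u v\<bar>) < \<bar>M u u\<bar>"
    using assms unfolding strictly_diag_dominant_def by blast
  ultimately show ?thesis by linarith
qed

lemma strictly_diag_dominant_eliminate:
  fixes M :: "'a \<Rightarrow> 'a \<Rightarrow> real"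
  assumes "finite F" "p \<notin> F" and dom: "strictly_diag_dominant (insert p F) M"
  shows "strictly_diag_dominant F (\<lambda>u v. M u v - M u p * M p v / M p p)"
  unfolding strictly_diag_dominant_def
proof
  fix u assume u: "u \<in> F"
  define M' where "M' = (\<lambda>u v. M u v - M u p * M p v / M p p)"
  define c where "c = \<bar>M u p\<bar> / \<bar>M p p\<bar>"
  have row_p: "(\<Sum>v\<in>F. \<bar>M p v\<bar>) < \<bar>M p p\<bar>"
    using dom assms(2) unfolding strictly_diag_dominant_def by (metis Diff_insert_absorb insertI1)
  have "M p p \<noteq> 0"
    using strictly_diag_dominant_diag_nonzero[OF dom] by simp
  have "u \<noteq> p" using u assms(2) by auto
  have row_u: "\<bar>M u p\<bar> + (\<Sum>v\<in>F - {u}. \<bar>M u v\<bar>) < \<bar>M u u\<bar>"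
  proof -
    have "insert p F - {u} = insert p (F - {u})" using \<open>u \<noteq> p\<close> by auto
    then show ?thesis
      using dom u assms unfolding strictly_diag_dominant_def by auto
  qed
  have off_diag: "(\<Sum>v\<in>F - {u}. \<bar>M' u v\<bar>) \<le> (\<Sum>v\<in>F - {u}. \<bar>M u v\<bar>) + c * (\<Sum>v\<in>F - {u}. \<bar>M p v\<bar>)"
  proof -
    have "(\<Sum>v\<in>F - {u}. \<bar>M' u v\<bar>) \<le> (\<Sum>v\<in>F - {u}. \<bar>M u v\<bar> + c * \<bar>M p v\<bar>)"
      by (intro sum_mono) (auto simp: M'_def c_def abs_mult intro: order_trans[OF abs_triangle_ineq4])
    then show ?thesis by (simp add: sum.distrib sum_distrib_left)
  qed
  have diag: "\<bar>M u u\<bar> - c * \<bar>M p u\<bar> \<le> \<bar>M' u u\<bar>"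
  proof -
    have "\<bar>M u p * M p u / M p p\<bar> = c * \<bar>M p u\<bar>" by (simp add: c_def abs_mult)
    then show ?thesis unfolding M'_def by linarith
  qed
  have "c * (\<bar>M p u\<bar> + (\<Sum>v\<in>F - {u}. \<bar>M p v\<bar>)) = c * (\<Sum>v\<in>F. \<bar>M p v\<bar>)"
    using u assms(1) by (simp add: sum.remove)
  also have "\<dots> \<le> c * \<bar>M p p\<bar>"
    using row_p by (intro mult_left_mono) (auto simp: c_def)
  also have "\<dots> = \<bar>M u p\<bar>" using \<open>M p p \<noteq> 0\<close> by (simp add: c_def)
  finally show "(\<Sum>v\<in>F - {u}. \<bar>M' u v\<bar>) < \<bar>M' u u\<bar>"
    using off_diag diag row_u by (simp add: distrib_left)
qed

lemma strictly_diag_dominant_solvable: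
  fixes M :: "'a \<Rightarrow> 'a \<Rightarrow> real"
  assumes "finite V" "strictly_diag_dominant V M"
  shows "\<exists>z. \<forall>u\<in>V. (\<Sum>v\<in>V. M u v * z v) = b u"
  using assms
proof (induction V arbitrary: M b rule: finite_induct)
  case empty
  then show ?case by simp
next
  case (insert p F)
  have "M p p \<noteq> 0"
    using strictly_diag_dominant_diag_nonzero[OF insert.prems] by simp
  obtain z' where z': "\<forall>u\<in>F. (\<Sum>v\<in>F. (M u v - M u p * M p v / M p p) * z' v) = b u - M u p * b p / M p p"
    using insert.IH[OF strictly_diag_dominant_eliminate[OF insert.hyps insert.prems],
        where b = "\<lambda>u. b u - M u p * b p / M p p"] by blast
  define zp where "zp = (b p - (\<Sum>v\<in>F. M p v * z' v)) / M p p"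
  have row: "(\<Sum>v\<in>insert p F. M u v * (z'(p := zp)) v) = M u p * zp + (\<Sum>v\<in>F. M u v * z' v)" for u
    using insert.hyps by (auto intro!: sum.cong)
  show ?case
  proof (intro exI ballI)
    fix u assume u: "u \<in> insert p F"
    show "(\<Sum>v\<in>insert p F. M u v * (z'(p := zp)) v) = b u"
    proof (cases "u = p")
      case True
      then show ?thesis using row[of p] \<open>M p p \<noteq> 0\<close> by (simp add: zp_def field_simps)
    next
      case False
      then have "(\<Sum>v\<in>F. (M u v - M u p * M p v / M p p) * z' v) = b u - M u p * b p / M p p"
        using z' u by auto
      then have "(\<Sum>v\<in>F. M u v * z' v) - M u p / M p p * (\<Sum>v\<in>F. M p v * z' v) = b u - M u p * b p / M p p"
        by (simp add: algebra_simps sum_subtractf sum_distrib_left)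
      moreover have "M u p * zp = M u p * b p / M p p - M u p / M p p * (\<Sum>v\<in>F. M p v * z' v)"
        unfolding zp_def by (simp add: diff_divide_distrib right_diff_distrib)
      ultimately show ?thesis using row[of u] by simp
    qed
  qed
qed

definition diag_adj_op :: "'a set \<Rightarrow> ('a \<Rightarrow> 'a \<Rightarrow> bool) \<Rightarrow> ('a \<Rightarrow> real) \<Rightarrow> ('a \<Rightarrow> real) \<Rightarrow> 'a \<Rightarrow> real" where
  "diag_adj_op V E D x u = D u * x u + (\<Sum>v\<in>neighbours V E u. x v)"

lemma sum_neighbours_eq:
  assumes "simple_graph V E"
  shows "(\<Sum>v\<in>neighbours V E u. f v) = (\<Sum>v\<in>V. if E u v then f v else 0)"
  using assms unfolding neighbours_def simple_graph_def by (simp add: sum.inter_filter)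

lemma sum_neighbours_swap:
  assumes G: "simple_graph V E"
  shows "(\<Sum>u\<in>V. \<Sum>v\<in>neighbours V E u. f u v) = (\<Sum>u\<in>V. \<Sum>v\<in>neighbours V E u. f v u)"
proof -
  have sym: "E u v = E v u" for u v using G unfolding simple_graph_def by blast
  have "(\<Sum>u\<in>V. \<Sum>v\<in>neighbours V E u. f u v) = (\<Sum>u\<in>V. \<Sum>v\<in>V. if E u v then f u v else 0)"
    by (intro sum.cong refl sum_neighbours_eq[OF G])
  also have "\<dots> = (\<Sum>v\<in>V. \<Sum>u\<in>V. if E v u then f u v else 0)"
    by (subst sum.swap) (simp add: sym)
  also have "\<dots> = (\<Sum>v\<in>V. \<Sum>u\<in>neighbours V E v. f u v)"
    by (intro sum.cong refl sum_neighbours_eq[OF G, symmetric])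
  finally show ?thesis .
qed

lemma sum_sum_neighbours:
  assumes "simple_graph V E"
  shows "(\<Sum>u\<in>V. \<Sum>v\<in>neighbours V E u. f v) = (\<Sum>u\<in>V. real (degree V E u) * f u)"
  using sum_neighbours_swap[OF assms, of "\<lambda>u v. f u"] by (simp add: degree_def)

lemma diag_adj_op_diff:
  "diag_adj_op V E D (\<lambda>v. a v - b v) u = diag_adj_op V E D a u - diag_adj_op V E D b u"
  unfolding diag_adj_op_def by (simp add: algebra_simps sum_subtractf)

lemma diag_adj_form_eq:
  "(\<Sum>u\<in>V. a u * diag_adj_op V E D b u)
     = (\<Sum>u\<in>V. D u * a u * b u) + (\<Sum>u\<in>V. \<Sum>v\<in>neighbours V E u. a u * b v)"
  unfolding diag_adj_op_def by (simp add: algebra_simps sum.distrib sum_distrib_left)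

lemma diag_adj_form_sym:
  assumes "simple_graph V E"
  shows "(\<Sum>u\<in>V. a u * diag_adj_op V E D b u) = (\<Sum>u\<in>V. b u * diag_adj_op V E D a u)"
  unfolding diag_adj_form_eq sum_neighbours_swap[OF assms, of "\<lambda>u v. a u * b v"]
  by (simp add: ac_simps)

lemma abs_sum_neighbours_products_le:
  assumes G: "simple_graph V E"
  shows "\<bar>\<Sum>u\<in>V. \<Sum>v\<in>neighbours V E u. a u * a v\<bar> \<le> (\<Sum>u\<in>V. real (degree V E u) * (a u)\<^sup>2)"
proof -
  have "\<bar>\<Sum>u\<in>V. \<Sum>v\<in>neighbours V E u. a u * a v\<bar>
      \<le> (\<Sum>u\<in>V. \<Sum>v\<in>neighbours V E u. ((a u)\<^sup>2 + (a v)\<^sup>2) / 2)"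
  proof (rule order_trans[OF sum_abs sum_mono], rule order_trans[OF sum_abs sum_mono])
    fix u v
    have "0 \<le> (\<bar>a u\<bar> - \<bar>a v\<bar>)\<^sup>2" by simp
    then show "\<bar>a u * a v\<bar> \<le> ((a u)\<^sup>2 + (a v)\<^sup>2) / 2"
      by (simp add: power2_diff abs_mult field_simps)
  qed
  also have "\<dots> = (\<Sum>u\<in>V. \<Sum>v\<in>neighbours V E u. (a u)\<^sup>2 / 2) + (\<Sum>u\<in>V. \<Sum>v\<in>neighbours V E u. (a v)\<^sup>2 / 2)"
    by (simp add: add_divide_distrib sum.distrib)
  also have "\<dots> = (\<Sum>u\<in>V. real (degree V E u) * (a u)\<^sup>2)"
    unfolding sum_sum_neighbours[OF G] by (simp add: degree_def sum.distrib[symmetric])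
  finally show ?thesis .
qed

lemma diag_adj_form_nonneg:
  assumes G: "simple_graph V E" and D: "\<forall>u\<in>V. real (degree V E u) \<le> D u"
  shows "0 \<le> (\<Sum>u\<in>V. a u * diag_adj_op V E D a u)"
proof -
  have "(\<Sum>u\<in>V. real (degree V E u) * (a u)\<^sup>2) \<le> (\<Sum>u\<in>V. D u * a u * a u)"
    using D by (intro sum_mono) (simp add: mult.assoc mult_right_mono flip: power2_eq_square)
  then show ?thesis
    using abs_sum_neighbours_products_le[OF G, of a] unfolding diag_adj_form_eq by linarith
qed

lemma diag_adj_form_le:
  assumes "simple_graph V E"
  shows "(\<Sum>u\<in>V. a u * diag_adj_op V E D a u) \<le> (\<Sum>u\<in>V. (D u + real (degree V E u)) * (a u)\<^sup>2)"
  using abs_sum_neighbours_products_le[OF assms, of a]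
  unfolding diag_adj_form_eq by (simp add: algebra_simps power2_eq_square sum.distrib)

text \<open>With \<open>e = e\<^sup>+ - e\<^sup>-\<close>, each row gives \<open>D\<^sub>u e\<^sup>-\<^sub>u \<le> \<Sum>\<^sub>v\<^sub>\<sim>\<^sub>u e\<^sup>+\<^sub>v\<close>; dividing by \<open>D\<^sub>u\<close> and
  counting each edge from its other end bounds \<open>\<Sum>e\<^sup>-\<close> by \<open>\<Sum>\<^sub>v e\<^sup>+\<^sub>v \<Sum>\<^sub>u\<^sub>\<sim>\<^sub>v 1/D\<^sub>u \<le> \<Sum>e\<^sup>+\<close>.\<close>

lemma sum_nonneg_of_diag_adj_op_nonneg:
  assumes G: "simple_graph V E" and D_pos: "\<forall>u\<in>V. 0 < D u"
    and D_inverse_sum: "\<forall>v\<in>V. (\<Sum>u\<in>neighbours V E v. 1 / D u) \<le> 1"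
    and e: "\<forall>u\<in>V. 0 \<le> diag_adj_op V E D e u"
  shows "0 \<le> (\<Sum>u\<in>V. e u)"
proof -
  define pos where "pos u = max 0 (e u)" for u
  define neg where "neg u = max 0 (- e u)" for u
  have pos_nonneg: "0 \<le> pos u" for u unfolding pos_def by simp
  have neg_le: "neg u \<le> (\<Sum>v\<in>neighbours V E u. pos v / D u)" if u: "u \<in> V" for u
  proof -
    have "0 \<le> D u * e u + (\<Sum>v\<in>neighbours V E u. e v)"
      using e u unfolding diag_adj_op_def by blast
    then have "- (D u * e u) \<le> (\<Sum>v\<in>neighbours V E u. e v)" by linarith
    also have "\<dots> \<le> (\<Sum>v\<in>neighbours V E u. pos v)"
      by (intro sum_mono) (simp add: pos_def)
    finally have "- e u \<le> (\<Sum>v\<in>neighbours V E u. pos v) / D u"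
      using D_pos u by (simp add: pos_le_divide_eq mult.commute)
    moreover have "0 \<le> (\<Sum>v\<in>neighbours V E u. pos v) / D u"
      using D_pos u by (intro divide_nonneg_pos sum_nonneg pos_nonneg) auto
    ultimately show ?thesis unfolding neg_def by (simp add: sum_divide_distrib)
  qed
  have "(\<Sum>u\<in>V. neg u) \<le> (\<Sum>u\<in>V. \<Sum>v\<in>neighbours V E u. pos v / D u)"
    using neg_le by (rule sum_mono)
  also have "\<dots> = (\<Sum>u\<in>V. pos u * (\<Sum>v\<in>neighbours V E u. 1 / D v))"
    unfolding sum_neighbours_swap[OF G, of "\<lambda>u v. pos v / D u"] by (simp add: sum_distrib_left)
  also have "\<dots> \<le> (\<Sum>u\<in>V. pos u)"
    using D_inverse_sum pos_nonneg by (intro sum_mono) (simp add: mult_left_le)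
  finally have "(\<Sum>u\<in>V. neg u) \<le> (\<Sum>u\<in>V. pos u)" .
  moreover have "e u = pos u - neg u" for u unfolding pos_def neg_def by simp
  ultimately show ?thesis by (simp add: sum_subtractf)
qed

lemma sum_ge_of_diag_adj_op_eq_one:
  assumes G: "simple_graph V E" and D: "\<forall>u\<in>V. real (degree V E u) \<le> D u"
    and z: "\<forall>u\<in>V. diag_adj_op V E D z u = 1"
  shows "2 * (\<Sum>u\<in>V. w u) - (\<Sum>u\<in>V. w u * diag_adj_op V E D w u) \<le> (\<Sum>u\<in>V. z u)"
proof -
  have zz: "(\<Sum>u\<in>V. z u * diag_adj_op V E D z u) = (\<Sum>u\<in>V. z u)"
    and wz: "(\<Sum>u\<in>V. w u * diag_adj_op V E D z u) = (\<Sum>u\<in>V. w u)"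
    using z by simp_all
  have zw: "(\<Sum>u\<in>V. z u * diag_adj_op V E D w u) = (\<Sum>u\<in>V. w u)"
    using wz diag_adj_form_sym[OF G] by metis
  have "0 \<le> (\<Sum>u\<in>V. (z u - w u) * diag_adj_op V E D (\<lambda>v. z v - w v) u)"
    by (rule diag_adj_form_nonneg[OF G D])
  also have "\<dots> = (\<Sum>u\<in>V. z u * diag_adj_op V E D z u) - (\<Sum>u\<in>V. z u * diag_adj_op V E D w u)
      - (\<Sum>u\<in>V. w u * diag_adj_op V E D z u) + (\<Sum>u\<in>V. w u * diag_adj_op V E D w u)"
    unfolding diag_adj_op_diff by (simp add: algebra_simps sum.distrib sum_subtractf)
  finally show ?thesis using zz zw wz by linarith
qed

lemma mat_vec_diag_adj:
  assumes G: "simple_graph V E" and u: "u \<in> V"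
  shows "mat_vec V (\<lambda>u v. (if u = v then D u else 0) + adj_matrix E u v) x u = diag_adj_op V E D x u"
proof -
  have "finite V" using G unfolding simple_graph_def by blast
  have "mat_vec V (\<lambda>u v. (if u = v then D u else 0) + adj_matrix E u v) x u
      = (\<Sum>v\<in>V. (if u = v then D u * x v else 0) + (if E u v then x v else 0))"
    unfolding mat_vec_def adj_matrix_def by (intro sum.cong) (auto simp: distrib_right)
  also have "\<dots> = (\<Sum>v\<in>V. if u = v then D u * x v else 0) + (\<Sum>v\<in>V. if E u v then x v else 0)"
    by (rule sum.distrib)
  also have "\<dots> = diag_adj_op V E D x u"
    using \<open>finite V\<close> u unfolding diag_adj_op_def sum_neighbours_eq[OF G] by simp
  finally show ?thesis .
qed

lemma diag_adj_strictly_diag_dominant: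
  assumes G: "simple_graph V E" and D: "\<forall>u\<in>V. real (degree V E u) < D u"
  shows "strictly_diag_dominant V (\<lambda>u v. (if u = v then D u else 0) + adj_matrix E u v)"
  unfolding strictly_diag_dominant_def
proof
  fix u assume u: "u \<in> V"
  have "finite V" and irrefl: "\<not> E u u" using G unfolding simple_graph_def by blast+
  have "(\<Sum>v\<in>V - {u}. \<bar>(if u = v then D u else 0) + adj_matrix E u v\<bar>) = (\<Sum>v\<in>V - {u}. if E u v then 1 else 0)"
    unfolding adj_matrix_def by (intro sum.cong) auto
  also have "\<dots> = (\<Sum>v\<in>V. if E u v then 1 else 0)"
    using \<open>finite V\<close> u irrefl by (simp add: sum.remove)
  also have "\<dots> = real (degree V E u)"
    using sum_neighbours_eq[OF G, where u = u and f = "\<lambda>_. 1 :: real"] by (simp add: degree_def)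
  also have "\<dots> < \<bar>(if u = u then D u else 0) + adj_matrix E u u\<bar>"
    using D u irrefl unfolding adj_matrix_def by force
  finally show "(\<Sum>v\<in>V - {u}. \<bar>(if u = v then D u else 0) + adj_matrix E u v\<bar>)
      < \<bar>(if u = u then D u else 0) + adj_matrix E u u\<bar>" .
qed

lemma degree_le_max_degree:
  assumes "simple_graph V E" "u \<in> V"
  shows "degree V E u \<le> max_degree V E"
  using assms unfolding max_degree_def simple_graph_def by (intro Max_ge) auto

lemma sum_neighbours_inverse_le_one:
  assumes G: "simple_graph V E" and D: "\<forall>u\<in>V. real (max_degree V E) + 1 \<le> D u"
    and v: "v \<in> V"
  shows "(\<Sum>u\<in>neighbours V E v. 1 / D u) \<le> 1"
proof -
  have "(\<Sum>u\<in>neighbours V E v. 1 / D u) \<le> (\<Sum>u\<in>neighbours V E v. 1 / (real (max_degree V E) + 1))"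
    using D by (intro sum_mono divide_left_mono) (auto simp: neighbours_def)
  also have "\<dots> \<le> 1"
    using degree_le_max_degree[OF G v] by (simp add: degree_def [symmetric])
  finally show ?thesis .
qed

lemma diag_adj_op_solvable:
  assumes G: "simple_graph V E" and D: "\<forall>u\<in>V. real (degree V E u) < D u"
  shows "\<exists>z. \<forall>u\<in>V. diag_adj_op V E D z u = b u"
proof -
  have "finite V" using G unfolding simple_graph_def by blast
  then obtain z where "\<forall>u\<in>V. mat_vec V (\<lambda>u v. (if u = v then D u else 0) + adj_matrix E u v) z u = b u"
    using strictly_diag_dominant_solvable[OF _ diag_adj_strictly_diag_dominant[OF G D]]
    unfolding mat_vec_def by blast
  then show ?thesis by (auto simp: mat_vec_diag_adj[OF G])
qed

lemma sum_ge_of_diag_adj_op_ge_one: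
  assumes G: "simple_graph V E" and D: "\<forall>u\<in>V. real (max_degree V E) + 1 \<le> D u"
    and x: "\<forall>u\<in>V. 1 \<le> diag_adj_op V E D x u"
  shows "(\<Sum>u\<in>V. 1 / (D u + real (degree V E u))) \<le> (\<Sum>u\<in>V. x u)"
proof -
  have "0 < D u" "real (degree V E u) < D u" "real (degree V E u) \<le> D u" if "u \<in> V" for u
    using degree_le_max_degree[OF G that] D that by force+
  then have D_pos: "\<forall>u\<in>V. 0 < D u" and D_gt: "\<forall>u\<in>V. real (degree V E u) < D u"
    and D_ge: "\<forall>u\<in>V. real (degree V E u) \<le> D u"
    by blast+
  obtain z where z: "\<forall>u\<in>V. diag_adj_op V E D z u = 1"
    using diag_adj_op_solvable[OF G D_gt, where b = "\<lambda>_. 1"] by blast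
  have "0 \<le> (\<Sum>u\<in>V. x u - z u)"
    using x z sum_neighbours_inverse_le_one[OF G D]
    by (intro sum_nonneg_of_diag_adj_op_nonneg[OF G D_pos]) (simp_all add: diag_adj_op_diff)
  then have x_ge_z: "(\<Sum>u\<in>V. z u) \<le> (\<Sum>u\<in>V. x u)" by (simp add: sum_subtractf)
  define w where "w u = 1 / (D u + real (degree V E u))" for u
  have "(\<Sum>u\<in>V. w u * diag_adj_op V E D w u) \<le> (\<Sum>u\<in>V. (D u + real (degree V E u)) * (w u)\<^sup>2)"
    by (rule diag_adj_form_le[OF G])
  also have "\<dots> = (\<Sum>u\<in>V. w u)" by (intro sum.cong refl) (simp add: w_def power2_eq_square)
  finally show ?thesis
    using sum_ge_of_diag_adj_op_eq_one[OF G D_ge z, of w] x_ge_z unfolding w_def by linarith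
qed

theorem mainTheorem7:
  fixes V :: "'a set" and E :: "'a \<Rightarrow> 'a \<Rightarrow> bool"
    and lam :: "'a \<Rightarrow> real" and x :: "'a \<Rightarrow> real"
  assumes G: "simple_graph V E"
    and lam_pos: "\<forall>u\<in>V. lam u > 0"
    and lam_small: "\<forall>u\<in>V. lam u * real (max_degree V E) < 1"
    and x_nonneg: "\<forall>u\<in>V. x u \<ge> 0"
    and x_cover: "\<forall>u\<in>V. mat_vec V (\<lambda>u v. diag_B lam u v + adj_matrix E u v) x u \<ge> 1"
  shows "(\<Sum>u\<in>V. x u) \<ge> (\<Sum>u\<in>V. lam u / (1 + (real (degree V E u) + 1) * lam u))"
proof -
  define D where "D u = 1 + 1 / lam u" for u
  have "diag_B lam = (\<lambda>u v. if u = v then D u else 0)"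
    unfolding diag_B_def D_def by blast
  then have x: "\<forall>u\<in>V. 1 \<le> diag_adj_op V E D x u"
    using x_cover by (simp add: mat_vec_diag_adj[OF G])
  have D: "\<forall>u\<in>V. real (max_degree V E) + 1 \<le> D u"
    using lam_pos lam_small by (auto simp: D_def field_simps)
  have "lam u / (1 + (real (degree V E u) + 1) * lam u) = 1 / (D u + real (degree V E u))"
    if "u \<in> V" for u
  proof -
    have "0 < lam u" using lam_pos that by blast
    then show ?thesis by (simp add: D_def field_simps)
  qed
  then show ?thesis
    using sum_ge_of_diag_adj_op_ge_one[OF G D x] by simp
qed

end
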